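(* Let $\{E_i\}_{i\in I}$ be a family of $F$-Banach spaces, each regarded as a complete bornological $F$-vector space (bounded subsets being the norm-bounded subsets). Then the direct sum $\bigoplus_{i\in I}E_i$ in the category of complete bornological $F$-vector spaces is proper.
   Context: $F$ is a field complete with respect to a non-trivial non-Archimedean absolute value, $F^{\circ}$ its unit ball, $\pi$ a pseudo-uniformiser. A bornology on an $F$-vector space $E$ is a collection of "bounded" subsets closed under subsets, containing singletons, closed under finite unions, under multiplication by nonzero scalars, and under $B\mapsto F^{\circ}B$. The direct sum $\bigoplus_i E_i$ of complete bornological spaces has as underlying space the algebraic direct sum, and a subset is bounded iff it is contained in a finite sum $\sum_i B_i$ of bounded subsets $B_i\subseteq E_i$. A sequence $(e_n)$ in a bornological space $E$ converges (bornologically) to $0$ if there is a bounded $B\subseteq E$ such that for every $\lambda\in F\setminus\{0\}$ there is $N$ with $e_n\in\lambda B$ for all $n\ge N$; it converges to $e$ if $(e-e_n)$ converges to $0$. A subset $C$ is (bornologically) closed if every sequence of elements of $C$ converging to some element converges to an element of $C$. $E$ is proper if its bornology has a basis of closed subsets (a basis being a family of bounded sets such that every bounded set lies in a finite union of members). *)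

theory Defs
  imports Complex_Main
begin

definition nonarch_complete_field :: "('k::field \<Rightarrow> real) \<Rightarrow> bool" where
  "nonarch_complete_field absv \<longleftrightarrow>
     (\<forall>x. 0 \<le> absv x) \<and> (\<forall>x. absv x = 0 \<longleftrightarrow> x = 0) \<and>
     (\<forall>x y. absv (x * y) = absv x * absv y) \<and>
     (\<forall>x y. absv (x + y) \<le> max (absv x) (absv y)) \<and>
     (\<exists>x. x \<noteq> 0 \<and> absv x \<noteq> 1) \<and>
     (\<forall>a :: nat \<Rightarrow> 'k.
        (\<forall>e>0. \<exists>N. \<forall>m\<ge>N. \<forall>n\<ge>N. absv (a m - a n) < e) \<longrightarrow>
        (\<exists>l. \<forall>e>0. \<exists>N. \<forall>n\<ge>N. absv (a n - l) < e))"

definition banach_space ::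
  "('k::field \<Rightarrow> real) \<Rightarrow> ('k \<Rightarrow> 'v::ab_group_add \<Rightarrow> 'v) \<Rightarrow> 'v set \<Rightarrow> ('v \<Rightarrow> real) \<Rightarrow> bool" where
  "banach_space absv scale E N \<longleftrightarrow>
     module.subspace scale E \<and>
     (\<forall>x\<in>E. 0 \<le> N x) \<and> (\<forall>x\<in>E. N x = 0 \<longleftrightarrow> x = 0) \<and>
     (\<forall>c. \<forall>x\<in>E. N (scale c x) = absv c * N x) \<and>
     (\<forall>x\<in>E. \<forall>y\<in>E. N (x + y) \<le> N x + N y) \<and>
     (\<forall>a :: nat \<Rightarrow> 'v. (\<forall>n. a n \<in> E) \<longrightarrow>
        (\<forall>e>0. \<exists>N0. \<forall>m\<ge>N0. \<forall>n\<ge>N0. N (a m - a n) < e) \<longrightarrow>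
        (\<exists>l\<in>E. \<forall>e>0. \<exists>N0. \<forall>n\<ge>N0. N (a n - l) < e))"

definition norm_bounded :: "'v set \<Rightarrow> ('v \<Rightarrow> real) \<Rightarrow> 'v set \<Rightarrow> bool" where
  "norm_bounded E N B \<longleftrightarrow> B \<subseteq> E \<and> (\<exists>r. \<forall>x\<in>B. N x \<le> r)"

definition dsum_carrier :: "('i \<Rightarrow> 'v set) \<Rightarrow> ('i \<Rightarrow> 'v::zero) set" where
  "dsum_carrier E = {f. (\<forall>i. f i \<in> E i) \<and> finite {i. f i \<noteq> 0}}"

definition dsum_scale :: "('k \<Rightarrow> 'v \<Rightarrow> 'v) \<Rightarrow> 'k \<Rightarrow> ('i \<Rightarrow> 'v) \<Rightarrow> ('i \<Rightarrow> 'v)" where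
  "dsum_scale scale c f = (\<lambda>i. scale c (f i))"

definition dsum_bounded ::
  "('i \<Rightarrow> 'v set) \<Rightarrow> ('i \<Rightarrow> 'v \<Rightarrow> real) \<Rightarrow> ('i \<Rightarrow> 'v::zero) set set" where
  "dsum_bounded E N = {S. \<exists>J B. finite J \<and> (\<forall>j\<in>J. norm_bounded (E j) (N j) (B j)) \<and>
        S \<subseteq> {f. (\<forall>j\<in>J. f j \<in> B j) \<and> (\<forall>j. j \<notin> J \<longrightarrow> f j = 0)}}"

text \<open>A bornological space is given by a carrier X, scalar multiplication sm
  and the family bdd of bounded subsets.\<close>
definition born_conv0 :: "('k::field \<Rightarrow> 'a \<Rightarrow> 'a) \<Rightarrow> 'a set set \<Rightarrow> (nat \<Rightarrow> 'a) \<Rightarrow> bool" where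
  "born_conv0 sm bdd e \<longleftrightarrow>
     (\<exists>B\<in>bdd. \<forall>c. c \<noteq> 0 \<longrightarrow> (\<exists>N. \<forall>n\<ge>N. e n \<in> sm c ` B))"

definition born_conv :: "('k::field \<Rightarrow> 'a::minus \<Rightarrow> 'a) \<Rightarrow> 'a set set \<Rightarrow> (nat \<Rightarrow> 'a) \<Rightarrow> 'a \<Rightarrow> bool" where
  "born_conv sm bdd e x \<longleftrightarrow> born_conv0 sm bdd (\<lambda>n. x - e n)"

definition born_closed ::
  "'a set \<Rightarrow> ('k::field \<Rightarrow> 'a::minus \<Rightarrow> 'a) \<Rightarrow> 'a set set \<Rightarrow> 'a set \<Rightarrow> bool" where
  "born_closed X sm bdd C \<longleftrightarrow>
     (\<forall>e x. (\<forall>n. e n \<in> C) \<and> x \<in> X \<and> born_conv sm bdd e x \<longrightarrow>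
            (\<exists>y\<in>C. born_conv sm bdd e y))"

definition born_basis :: "'a set set \<Rightarrow> 'a set set \<Rightarrow> bool" where
  "born_basis bdd \<B> \<longleftrightarrow> \<B> \<subseteq> bdd \<and>
     (\<forall>B\<in>bdd. \<exists>\<F>. finite \<F> \<and> \<F> \<subseteq> \<B> \<and> B \<subseteq> \<Union>\<F>)"

definition born_proper ::
  "'a set \<Rightarrow> ('k::field \<Rightarrow> 'a::minus \<Rightarrow> 'a) \<Rightarrow> 'a set set \<Rightarrow> bool" where
  "born_proper X sm bdd \<longleftrightarrow>
     (\<exists>\<B>. born_basis bdd \<B> \<and> (\<forall>B\<in>\<B>. born_closed X sm bdd B))"

end

theory Submission
  imports Defs
begin

text \<open>The boxes of families supported in a finite set J with all components of norm at
  most r form a basis of the bornology of the direct sum. Each box is closed: if the e n lie in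
  a box and, for every c \<noteq> 0, eventually x - e n lies in c B for a bounded B inside a box of
  radius R, then the triangle inequality gives N j (x j) \<le> r + absv c * R for j in J and
  N j (x j) \<le> absv c * R otherwise. As the absolute value is non-trivial, absv c can be taken
  arbitrarily small, so x lies in the same box.\<close>

lemma exists_small_absv:
  fixes absv :: "'k::field \<Rightarrow> real"
  assumes mult: "\<And>x y. absv (x * y) = absv x * absv y"
    and zero_iff: "\<And>x. absv x = 0 \<longleftrightarrow> x = 0"
    and nontrivial: "x \<noteq> 0" "absv x \<noteq> 1"
    and "d > 0"
  shows "\<exists>c. c \<noteq> 0 \<and> absv c < d"
proof -
  have absv_1: "absv 1 = 1"
    using mult[of 1 1] zero_iff[of 1] by simp
  have absv_inverse: "absv (inverse y) = inverse (absv y)" if "y \<noteq> 0" for y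
    using mult[of y "inverse y"] that by (simp add: absv_1 inverse_unique)
  obtain a where a: "a \<noteq> 0" "absv a < 1"
  proof (cases "absv x < 1")
    case True
    with nontrivial that show ?thesis by blast
  next
    case False
    with nontrivial have "absv x > 1" by simp
    then have "absv (inverse x) < 1"
      using absv_inverse[OF nontrivial(1)] by (simp add: inverse_less_1_iff)
    with nontrivial show ?thesis by (intro that[of "inverse x"]) simp_all
  qed
  have absv_power: "absv (a ^ n) = absv a ^ n" for n
    by (induction n) (simp_all add: absv_1 mult)
  obtain n where "absv a ^ n < d"
    using real_arch_pow_inv[OF \<open>d > 0\<close> a(2)] by blast
  with a(1) show ?thesis by (metis absv_power power_not_zero)
qed

lemma le_if_le_plus_absv_multiples:
  fixes absv :: "'k::field \<Rightarrow> real"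
  assumes "nonarch_complete_field absv"
    and le: "\<And>c. c \<noteq> 0 \<Longrightarrow> t \<le> s + absv c * R"
    and "R \<ge> 0"
  shows "t \<le> s"
proof (rule ccontr)
  assume "\<not> t \<le> s"
  with \<open>R \<ge> 0\<close> have "(t - s) / (R + 1) > 0" by simp
  have mult: "\<And>x y. absv (x * y) = absv x * absv y"
    and zero_iff: "\<And>x. absv x = 0 \<longleftrightarrow> x = 0"
    and nonneg: "\<And>x. 0 \<le> absv x"
    using assms(1) by (simp_all add: nonarch_complete_field_def)
  obtain x where "x \<noteq> 0" "absv x \<noteq> 1"
    using assms(1) unfolding nonarch_complete_field_def by blast
  from exists_small_absv[OF mult zero_iff this \<open>(t - s) / (R + 1) > 0\<close>]
  obtain c where c: "c \<noteq> 0" "absv c < (t - s) / (R + 1)" by blast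
  with \<open>R \<ge> 0\<close> nonneg[of c] have "absv c * R \<le> absv c * (R + 1)" "absv c * (R + 1) < t - s"
    by (simp_all add: mult_left_mono pos_less_divide_eq)
  with le[OF c(1)] show False by linarith
qed

lemma (in vector_space) banach_space_mem:
  assumes "banach_space absv scale E N"
  shows banach_space_zero_mem: "0 \<in> E"
    and banach_space_scale_mem: "x \<in> E \<Longrightarrow> scale c x \<in> E"
  using assms subspace_0 subspace_scale by (simp_all add: banach_space_def)

lemma banach_space_norm:
  assumes "banach_space absv scale E N"
  shows banach_space_norm_nonneg: "x \<in> E \<Longrightarrow> 0 \<le> N x"
    and banach_space_norm_eq_0: "x \<in> E \<Longrightarrow> N x = 0 \<longleftrightarrow> x = 0"
    and banach_space_norm_scale: "x \<in> E \<Longrightarrow> N (scale c x) = absv c * N x"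
    and banach_space_norm_triangle: "x \<in> E \<Longrightarrow> y \<in> E \<Longrightarrow> N (x + y) \<le> N x + N y"
  using assms by (simp_all add: banach_space_def)

lemma (in vector_space) banach_space_norm_zero:
  assumes "banach_space absv scale E N"
  shows "N 0 = 0"
  using banach_space_norm_eq_0[OF assms banach_space_zero_mem[OF assms]] by simp

definition dsum_box :: "('i \<Rightarrow> 'v set) \<Rightarrow> ('i \<Rightarrow> 'v \<Rightarrow> real) \<Rightarrow> 'i set \<Rightarrow> real \<Rightarrow> ('i \<Rightarrow> 'v::zero) set"
  where "dsum_box E N J r =
    {f. \<forall>j. f j \<in> E j \<and> (j \<in> J \<longrightarrow> N j (f j) \<le> r) \<and> (j \<notin> J \<longrightarrow> f j = 0)}"

lemma dsum_box_bounded: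
  assumes "finite J"
  shows "dsum_box E N J r \<in> dsum_bounded E N"
proof -
  define B where "B j = {v \<in> E j. N j v \<le> r}" for j
  have "\<forall>j\<in>J. norm_bounded (E j) (N j) (B j)"
    unfolding norm_bounded_def B_def by blast
  moreover have "dsum_box E N J r \<subseteq> {f. (\<forall>j\<in>J. f j \<in> B j) \<and> (\<forall>j. j \<notin> J \<longrightarrow> f j = 0)}"
    unfolding dsum_box_def B_def by blast
  ultimately show ?thesis
    unfolding dsum_bounded_def using assms by blast
qed

lemma dsum_bounded_subset_box:
  assumes "S \<in> dsum_bounded E N" and zero_mem: "\<And>i. 0 \<in> E i"
  obtains J R where "finite J" "R \<ge> 0" "S \<subseteq> dsum_box E N J R"
proof -
  obtain J B where J: "finite J" "\<forall>j\<in>J. norm_bounded (E j) (N j) (B j)"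
    and S: "S \<subseteq> {f. (\<forall>j\<in>J. f j \<in> B j) \<and> (\<forall>j. j \<notin> J \<longrightarrow> f j = 0)}"
    using assms(1)[unfolded dsum_bounded_def mem_Collect_eq] by iprover
  have r_exists: "\<forall>j\<in>J. \<exists>r. B j \<subseteq> E j \<and> (\<forall>x\<in>B j. N j x \<le> r)"
    using J(2) unfolding norm_bounded_def by blast
  obtain r where r: "\<forall>j\<in>J. B j \<subseteq> E j \<and> (\<forall>x\<in>B j. N j x \<le> r j)"
    using bchoice[OF r_exists] by blast
  define R where "R = (\<Sum>j\<in>J. \<bar>r j\<bar>)"
  have "R \<ge> 0"
    unfolding R_def by (simp add: sum_nonneg)
  have r_le_R: "r j \<le> R" if "j \<in> J" for j
    using member_le_sum[of j J "\<lambda>j. \<bar>r j\<bar>"] J(1) that unfolding R_def by simp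
  have "S \<subseteq> dsum_box E N J R"
  proof
    fix f assume "f \<in> S"
    with S have f: "\<forall>j\<in>J. f j \<in> B j" "\<forall>j. j \<notin> J \<longrightarrow> f j = 0" by blast+
    have "f j \<in> E j" for j
      using f r zero_mem by (cases "j \<in> J") auto
    moreover have "N j (f j) \<le> R" if "j \<in> J" for j
      using f r r_le_R that by (meson order_trans subsetD)
    ultimately show "f \<in> dsum_box E N J R"
      using f(2) unfolding dsum_box_def by blast
  qed
  with J(1) \<open>R \<ge> 0\<close> that show ?thesis by blast
qed

lemma born_basis_dsum_box:
  assumes "\<And>i. 0 \<in> E i"
  shows "born_basis (dsum_bounded E N) {dsum_box E N J r | J r. finite J}"
  unfolding born_basis_def
proof (intro conjI ballI)
  show "{dsum_box E N J r | J r. finite J} \<subseteq> dsum_bounded E N"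
  proof
    fix B assume "B \<in> {dsum_box E N J r | J r. finite J}"
    then obtain J r where "finite J" "B = dsum_box E N J r" by blast
    then show "B \<in> dsum_bounded E N" by (simp add: dsum_box_bounded)
  qed
next
  fix S assume "S \<in> dsum_bounded E N"
  then obtain J R where "finite J" "S \<subseteq> dsum_box E N J R"
    using assms by (rule dsum_bounded_subset_box)
  then show "\<exists>\<F>. finite \<F> \<and> \<F> \<subseteq> {dsum_box E N J r | J r. finite J} \<and> S \<subseteq> \<Union>\<F>"
    by (intro exI[of _ "{dsum_box E N J R}"]) blast
qed

lemma born_conv_dsum_box_norm_bound:
  fixes absv :: "'k::field \<Rightarrow> real"
  assumes "nonarch_complete_field absv" and "vector_space scale"
    and banach: "\<forall>i. banach_space absv scale (E i) (N i)"
    and box: "\<And>n. e n \<in> dsum_box E N J r"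
    and conv: "born_conv (dsum_scale scale) (dsum_bounded E N) e x"
  obtains R where "R \<ge> 0"
    "\<And>c j. c \<noteq> 0 \<Longrightarrow> N j (x j) \<le> (if j \<in> J then r else 0) + absv c * R"
proof -
  interpret vector_space scale by fact
  have absv_nonneg: "0 \<le> absv c" for c
    using assms(1) by (simp add: nonarch_complete_field_def)
  have zero_mem: "0 \<in> E j" and norm_zero: "N j 0 = 0"
    and scale_mem: "v \<in> E j \<Longrightarrow> scale c v \<in> E j" for j c v
    using banach_space_zero_mem[OF banach[rule_format]] banach_space_norm_zero[OF banach[rule_format]]
      banach_space_scale_mem[OF banach[rule_format]] by this+
  obtain S where S: "S \<in> dsum_bounded E N"
    and eventually: "\<And>c. c \<noteq> 0 \<Longrightarrow> \<exists>M. \<forall>n\<ge>M. x - e n \<in> dsum_scale scale c ` S"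
    using conv unfolding born_conv_def born_conv0_def by blast
  obtain J' R where "R \<ge> 0" and S_box: "S \<subseteq> dsum_box E N J' R"
    using dsum_bounded_subset_box[OF S zero_mem] by blast
  have "N j (x j) \<le> (if j \<in> J then r else 0) + absv c * R" if c: "c \<noteq> 0" for c j
  proof -
    obtain M where "\<forall>n\<ge>M. x - e n \<in> dsum_scale scale c ` S"
      using eventually[OF c] by blast
    then have "x - e M \<in> dsum_scale scale c ` S"
      by simp
    then obtain g where "g \<in> S" and x_eq: "x - e M = dsum_scale scale c g"
      by (rule imageE) simp
    with S_box have "g \<in> dsum_box E N J' R" by blast
    then have g_j: "g j \<in> E j \<and> N j (g j) \<le> R"
      using \<open>R \<ge> 0\<close> zero_mem[of j] norm_zero[of j] unfolding dsum_box_def by (cases "j \<in> J'") auto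
    have e_j: "e M j \<in> E j" "N j (e M j) \<le> (if j \<in> J then r else 0)"
      using box[of M] norm_zero[of j] unfolding dsum_box_def by auto
    have "x j = e M j + scale c (g j)"
      using fun_cong[OF x_eq, of j] unfolding dsum_scale_def by (simp add: algebra_simps)
    then have "N j (x j) \<le> N j (e M j) + N j (scale c (g j))"
      using banach_space_norm_triangle[OF banach[rule_format] e_j(1) scale_mem[OF g_j[THEN conjunct1]]] by simp
    also have "\<dots> = N j (e M j) + absv c * N j (g j)"
      using banach_space_norm_scale[OF banach[rule_format] g_j[THEN conjunct1]] by simp
    also have "\<dots> \<le> (if j \<in> J then r else 0) + absv c * R"
      using e_j(2) g_j absv_nonneg[of c] by (simp add: add_mono mult_left_mono)
    finally show ?thesis .
  qed
  with \<open>R \<ge> 0\<close> that show ?thesis by blast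
qed

lemma born_closed_dsum_box:
  fixes absv :: "'k::field \<Rightarrow> real"
  assumes "nonarch_complete_field absv" and "vector_space scale"
    and banach: "\<forall>i. banach_space absv scale (E i) (N i)"
  shows "born_closed (dsum_carrier E) (dsum_scale scale) (dsum_bounded E N) (dsum_box E N J r)"
  unfolding born_closed_def
proof (intro allI impI, elim conjE)
  fix e x
  assume box: "\<forall>n. e n \<in> dsum_box E N J r" and "x \<in> dsum_carrier E"
    and conv: "born_conv (dsum_scale scale) (dsum_bounded E N) e x"
  then have x_mem: "x j \<in> E j" for j
    unfolding dsum_carrier_def by blast
  obtain R where "R \<ge> 0"
    and bound: "\<And>c j. c \<noteq> 0 \<Longrightarrow> N j (x j) \<le> (if j \<in> J then r else 0) + absv c * R"
    using born_conv_dsum_box_norm_bound[OF assms] box conv by blast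
  have N_x: "N j (x j) \<le> (if j \<in> J then r else 0)" for j
    using le_if_le_plus_absv_multiples[OF assms(1) bound \<open>R \<ge> 0\<close>] .
  have "N j (x j) \<le> r" if "j \<in> J" for j
    using N_x[of j] that by simp
  moreover have "x j = 0" if "j \<notin> J" for j
  proof -
    have "N j (x j) = 0"
      using N_x[of j] that banach_space_norm_nonneg[OF banach[rule_format] x_mem[of j]] by simp
    then show ?thesis
      using banach_space_norm_eq_0[OF banach[rule_format] x_mem] by blast
  qed
  ultimately have "x \<in> dsum_box E N J r"
    using x_mem unfolding dsum_box_def by blast
  with conv show "\<exists>y\<in>dsum_box E N J r. born_conv (dsum_scale scale) (dsum_bounded E N) e y"
    by blast
qed

theorem lemma2p24:
  fixes absv :: "'k::field \<Rightarrow> real"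
    and scale :: "'k \<Rightarrow> 'v::ab_group_add \<Rightarrow> 'v"
    and E :: "'i \<Rightarrow> 'v set"
    and N :: "'i \<Rightarrow> 'v \<Rightarrow> real"
  assumes "nonarch_complete_field absv"
    and "vector_space scale"
    and "\<forall>i. banach_space absv scale (E i) (N i)"
  shows "born_proper (dsum_carrier E) (dsum_scale scale) (dsum_bounded E N)"
proof -
  have "0 \<in> E i" for i
    using vector_space.banach_space_zero_mem[OF assms(2)] assms(3) by blast
  then have "born_basis (dsum_bounded E N) {dsum_box E N J r | J r. finite J}"
    by (rule born_basis_dsum_box)
  with born_closed_dsum_box[OF assms] show ?thesis
    unfolding born_proper_def by blast
qed

end
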